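(* Let $\mathcal B$ be an extriangulated category with enough projectives and enough injectives, let $\mathcal D\subseteq\mathcal C$ be subcategories satisfying (RCP), and let $\mathcal H/\mathcal C$ be the heart of the cotorsion pair $(\mathcal C,\mathcal C^{\perp_1})$. If $\overline f:Y\to X$ is an epimorphism in $\mathcal H/\mathcal C$ with $X,Y\in\mathcal H$ and $Y\in\mathcal D^{\perp_1}$, then $X\in\mathcal D^{\perp_1}$. In other words, the full subcategory $\mathcal A$ of $\mathcal H/\mathcal C$ on objects of $\mathcal H\cap\mathcal D^{\perp_1}$ is closed under epimorphic images (quotients).
   Context: $(\mathcal B,\mathbb E,\mathfrak s)$ is an extriangulated category (Nakaoka–Palu); conflations $A\rightarrowtail B\twoheadrightarrow C$. Subcategories are full, additive, closed under isomorphisms and finite direct sums. $\mathcal P$ = projectives. $\mathcal X^{\perp_1}=\{B\mid\mathbb E(\mathcal X,B)=0\}$; rigid means $\mathbb E(\mathcal X,\mathcal X)=0$. (RCP): $\mathcal P\subseteq\mathcal C$, $\mathcal C$ rigid, contravariantly finite, closed under direct summands; then $(\mathcal C,\mathcal C^{\perp_1})$ is a cotorsion pair. For a cotorsion pair $(\mathcal U,\mathcal V)$, $\mathcal H$ is the subcategory of objects $B$ admitting conflations $V_B\rightarrowtail U_B\twoheadrightarrow B$, $B\rightarrowtail V^B\twoheadrightarrow U^B$ with $V_B\in\mathcal V$, $U^B\in\mathcal U$, $U_B,V^B\in\mathcal U\cap\mathcal V$; the heart is the abelian ideal quotient $\mathcal H/(\mathcal U\cap\mathcal V)$, here $\mathcal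 H/\mathcal C$. *)

theory Defs
  imports Main
begin

text \<open>
  Objects are all elements of type 'o.  Morphisms live in type 'm with
  hom-sets Hom X Y (pairwise disjoint, as in the usual definition of a category),
  composition Cmp g f (g after f), identities, and the abelian group structure
  on hom-sets (Addm, Negm, Zerom X Y).
  The bifunctor E is given by the sets Ext C A (= E(C,A)) of elements of type 'e
  (pairwise disjoint), their abelian group structure, and the actions
  Push a (= a_*) and Pull c (= c^*).
  The realization s is given by the relation Real:  Real delta x y  means that the
  sequence  A --x--> M --y--> C  belongs to the class s(delta).
\<close>

record ('o,'m,'e) extri =
  Hom   :: "'o \<Rightarrow> 'o \<Rightarrow> 'm set"
  Cmp   :: "'m \<Rightarrow> 'm \<Rightarrow> 'm"
  Idm   :: "'o \<Rightarrow> 'm"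
  Addm  :: "'m \<Rightarrow> 'm \<Rightarrow> 'm"
  Negm  :: "'m \<Rightarrow> 'm"
  Zerom :: "'o \<Rightarrow> 'o \<Rightarrow> 'm"
  Ext   :: "'o \<Rightarrow> 'o \<Rightarrow> 'e set"
  Adde  :: "'e \<Rightarrow> 'e \<Rightarrow> 'e"
  Nege  :: "'e \<Rightarrow> 'e"
  Zeroe :: "'o \<Rightarrow> 'o \<Rightarrow> 'e"
  Push  :: "'m \<Rightarrow> 'e \<Rightarrow> 'e"
  Pull  :: "'m \<Rightarrow> 'e \<Rightarrow> 'e"
  Real  :: "'e \<Rightarrow> 'm \<Rightarrow> 'm \<Rightarrow> bool"

definition category :: "('o,'m,'e) extri \<Rightarrow> bool" where
"category B \<longleftrightarrow>
  (\<forall>X. Idm B X \<in> Hom B X X) \<and>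
  (\<forall>X Y Z f g. f \<in> Hom B X Y \<longrightarrow> g \<in> Hom B Y Z \<longrightarrow> Cmp B g f \<in> Hom B X Z) \<and>
  (\<forall>X Y f. f \<in> Hom B X Y \<longrightarrow> Cmp B (Idm B Y) f = f \<and> Cmp B f (Idm B X) = f) \<and>
  (\<forall>W X Y Z f g h. f \<in> Hom B W X \<longrightarrow> g \<in> Hom B X Y \<longrightarrow> h \<in> Hom B Y Z \<longrightarrow>
      Cmp B h (Cmp B g f) = Cmp B (Cmp B h g) f) \<and>
  (\<forall>X Y X' Y' f. f \<in> Hom B X Y \<longrightarrow> f \<in> Hom B X' Y' \<longrightarrow> X = X' \<and> Y = Y')"

definition preadditive :: "('o,'m,'e) extri \<Rightarrow> bool" where
"preadditive B \<longleftrightarrow>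
  (\<forall>X Y. Zerom B X Y \<in> Hom B X Y \<and>
     (\<forall>f\<in>Hom B X Y. \<forall>g\<in>Hom B X Y. Addm B f g \<in> Hom B X Y) \<and>
     (\<forall>f\<in>Hom B X Y. Negm B f \<in> Hom B X Y) \<and>
     (\<forall>f\<in>Hom B X Y. \<forall>g\<in>Hom B X Y. \<forall>h\<in>Hom B X Y.
         Addm B (Addm B f g) h = Addm B f (Addm B g h)) \<and>
     (\<forall>f\<in>Hom B X Y. \<forall>g\<in>Hom B X Y. Addm B f g = Addm B g f) \<and>
     (\<forall>f\<in>Hom B X Y. Addm B (Zerom B X Y) f = f) \<and>
     (\<forall>f\<in>Hom B X Y. Addm B (Negm B f) f = Zerom B X Y)) \<and>
  (\<forall>X Y Z f f' g. f \<in> Hom B X Y \<longrightarrow> f' \<in> Hom B X Y \<longrightarrow> g \<in> Hom B Y Z \<longrightarrow>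
      Cmp B g (Addm B f f') = Addm B (Cmp B g f) (Cmp B g f')) \<and>
  (\<forall>X Y Z f g g'. f \<in> Hom B X Y \<longrightarrow> g \<in> Hom B Y Z \<longrightarrow> g' \<in> Hom B Y Z \<longrightarrow>
      Cmp B (Addm B g g') f = Addm B (Cmp B g f) (Cmp B g' f))"

definition zero_obj :: "('o,'m,'e) extri \<Rightarrow> 'o \<Rightarrow> bool" where
"zero_obj B Z \<longleftrightarrow> Idm B Z = Zerom B Z Z"

definition biproduct :: "('o,'m,'e) extri \<Rightarrow> 'o \<Rightarrow> 'o \<Rightarrow> 'o \<Rightarrow> 'm \<Rightarrow> 'm \<Rightarrow> 'm \<Rightarrow> 'm \<Rightarrow> bool" where
"biproduct B A1 A2 S i1 i2 p1 p2 \<longleftrightarrow>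
  i1 \<in> Hom B A1 S \<and> i2 \<in> Hom B A2 S \<and> p1 \<in> Hom B S A1 \<and> p2 \<in> Hom B S A2 \<and>
  Cmp B p1 i1 = Idm B A1 \<and> Cmp B p2 i2 = Idm B A2 \<and>
  Cmp B p2 i1 = Zerom B A1 A2 \<and> Cmp B p1 i2 = Zerom B A2 A1 \<and>
  Addm B (Cmp B i1 p1) (Cmp B i2 p2) = Idm B S"

definition additive :: "('o,'m,'e) extri \<Rightarrow> bool" where
"additive B \<longleftrightarrow> category B \<and> preadditive B \<and> (\<exists>Z. zero_obj B Z) \<and>
   (\<forall>A1 A2. \<exists>S i1 i2 p1 p2. biproduct B A1 A2 S i1 i2 p1 p2)"

definition is_iso :: "('o,'m,'e) extri \<Rightarrow> 'o \<Rightarrow> 'o \<Rightarrow> 'm \<Rightarrow> bool" where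
"is_iso B X Y f \<longleftrightarrow> f \<in> Hom B X Y \<and>
   (\<exists>g\<in>Hom B Y X. Cmp B g f = Idm B X \<and> Cmp B f g = Idm B Y)"

definition ET1 :: "('o,'m,'e) extri \<Rightarrow> bool" where
"ET1 B \<longleftrightarrow>
  (\<forall>C A. Zeroe B C A \<in> Ext B C A \<and>
     (\<forall>d\<in>Ext B C A. \<forall>e\<in>Ext B C A. Adde B d e \<in> Ext B C A) \<and>
     (\<forall>d\<in>Ext B C A. Nege B d \<in> Ext B C A) \<and>
     (\<forall>d\<in>Ext B C A. \<forall>e\<in>Ext B C A. \<forall>k\<in>Ext B C A.
         Adde B (Adde B d e) k = Adde B d (Adde B e k)) \<and>
     (\<forall>d\<in>Ext B C A. \<forall>e\<in>Ext B C A. Adde B d e = Adde B e d) \<and>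
     (\<forall>d\<in>Ext B C A. Adde B (Zeroe B C A) d = d) \<and>
     (\<forall>d\<in>Ext B C A. Adde B (Nege B d) d = Zeroe B C A)) \<and>
  (\<forall>C A C' A' d. d \<in> Ext B C A \<longrightarrow> d \<in> Ext B C' A' \<longrightarrow> C = C' \<and> A = A') \<and>
  (\<forall>C A A' a d. a \<in> Hom B A A' \<longrightarrow> d \<in> Ext B C A \<longrightarrow> Push B a d \<in> Ext B C A') \<and>
  (\<forall>C C' A c d. c \<in> Hom B C' C \<longrightarrow> d \<in> Ext B C A \<longrightarrow> Pull B c d \<in> Ext B C' A) \<and>
  (\<forall>C A d. d \<in> Ext B C A \<longrightarrow> Push B (Idm B A) d = d \<and> Pull B (Idm B C) d = d) \<and>
  (\<forall>C A A' A'' a a' d. a \<in> Hom B A A' \<longrightarrow> a' \<in> Hom B A' A'' \<longrightarrow> d \<in> Ext B C A \<longrightarrow>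
      Push B (Cmp B a' a) d = Push B a' (Push B a d)) \<and>
  (\<forall>C C' C'' A c c' d. c \<in> Hom B C' C \<longrightarrow> c' \<in> Hom B C'' C' \<longrightarrow> d \<in> Ext B C A \<longrightarrow>
      Pull B (Cmp B c c') d = Pull B c' (Pull B c d)) \<and>
  (\<forall>C C' A A' a c d. a \<in> Hom B A A' \<longrightarrow> c \<in> Hom B C' C \<longrightarrow> d \<in> Ext B C A \<longrightarrow>
      Push B a (Pull B c d) = Pull B c (Push B a d)) \<and>
  (\<forall>C A A' a d e. a \<in> Hom B A A' \<longrightarrow> d \<in> Ext B C A \<longrightarrow> e \<in> Ext B C A \<longrightarrow>
      Push B a (Adde B d e) = Adde B (Push B a d) (Push B a e)) \<and>
  (\<forall>C C' A c d e. c \<in> Hom B C' C \<longrightarrow> d \<in> Ext B C A \<longrightarrow> e \<in> Ext B C A \<longrightarrow>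
      Pull B c (Adde B d e) = Adde B (Pull B c d) (Pull B c e)) \<and>
  (\<forall>C A A' a a' d. a \<in> Hom B A A' \<longrightarrow> a' \<in> Hom B A A' \<longrightarrow> d \<in> Ext B C A \<longrightarrow>
      Push B (Addm B a a') d = Adde B (Push B a d) (Push B a' d)) \<and>
  (\<forall>C C' A c c' d. c \<in> Hom B C' C \<longrightarrow> c' \<in> Hom B C' C \<longrightarrow> d \<in> Ext B C A \<longrightarrow>
      Pull B (Addm B c c') d = Adde B (Pull B c d) (Pull B c' d))"

definition realizes :: "('o,'m,'e) extri \<Rightarrow> 'e \<Rightarrow> 'o \<Rightarrow> 'o \<Rightarrow> 'o \<Rightarrow> 'm \<Rightarrow> 'm \<Rightarrow> bool" where
"realizes B d A M C x y \<longleftrightarrow>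
   d \<in> Ext B C A \<and> x \<in> Hom B A M \<and> y \<in> Hom B M C \<and> Real B d x y"

definition seq_equiv :: "('o,'m,'e) extri \<Rightarrow> 'o \<Rightarrow> 'o \<Rightarrow> 'o \<Rightarrow> 'm \<Rightarrow> 'm \<Rightarrow> 'm \<Rightarrow> 'm \<Rightarrow> bool" where
"seq_equiv B M M' C x y x' y' \<longleftrightarrow>
   (\<exists>b. is_iso B M M' b \<and> Cmp B b x = x' \<and> Cmp B y' b = y)"

definition ET2 :: "('o,'m,'e) extri \<Rightarrow> bool" where
"ET2 B \<longleftrightarrow>
  \<comment> \<open>s(d) is exactly one equivalence class of sequences A -> M -> C\<close>
  (\<forall>d x y. Real B d x y \<longrightarrow> (\<exists>A M C. realizes B d A M C x y)) \<and>
  (\<forall>C A d. d \<in> Ext B C A \<longrightarrow> (\<exists>M x y. realizes B d A M C x y)) \<and>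
  (\<forall>d A M C x y M' x' y'. realizes B d A M C x y \<longrightarrow> realizes B d A M' C x' y' \<longrightarrow>
      seq_equiv B M M' C x y x' y') \<and>
  (\<forall>d A M C x y M' x' y'. realizes B d A M C x y \<longrightarrow> x' \<in> Hom B A M' \<longrightarrow> y' \<in> Hom B M' C \<longrightarrow>
      seq_equiv B M M' C x y x' y' \<longrightarrow> Real B d x' y') \<and>
  \<comment> \<open>realization property: morphisms of extensions lift\<close>
  (\<forall>d d' A M C x y A' M' C' x' y' a c.
      realizes B d A M C x y \<longrightarrow> realizes B d' A' M' C' x' y' \<longrightarrow>
      a \<in> Hom B A A' \<longrightarrow> c \<in> Hom B C C' \<longrightarrow> Push B a d = Pull B c d' \<longrightarrow>
      (\<exists>b\<in>Hom B M M'. Cmp B b x = Cmp B x' a \<and> Cmp B y' b = Cmp B c y)) \<and>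
  \<comment> \<open>additivity: s(0) is the split sequence\<close>
  (\<forall>A C S i1 i2 p1 p2. biproduct B A C S i1 i2 p1 p2 \<longrightarrow> Real B (Zeroe B C A) i1 p2) \<and>
  \<comment> \<open>additivity: s(d (+) d') = s(d) (+) s(d')\<close>
  (\<forall>d d' A M C x y A' M' C' x' y' SA iA iA' pA pA' SM iM iM' pM pM' SC iC iC' pC pC'.
      realizes B d A M C x y \<longrightarrow> realizes B d' A' M' C' x' y' \<longrightarrow>
      biproduct B A A' SA iA iA' pA pA' \<longrightarrow>
      biproduct B M M' SM iM iM' pM pM' \<longrightarrow>
      biproduct B C C' SC iC iC' pC pC' \<longrightarrow>
      Real B (Adde B (Push B iA (Pull B pC d)) (Push B iA' (Pull B pC' d')))
             (Addm B (Cmp B iM (Cmp B x pA)) (Cmp B iM' (Cmp B x' pA')))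
             (Addm B (Cmp B iC (Cmp B y pM)) (Cmp B iC' (Cmp B y' pM'))))"

definition ET3 :: "('o,'m,'e) extri \<Rightarrow> bool" where
"ET3 B \<longleftrightarrow>
  (\<forall>d d' A M C x y A' M' C' x' y' a b.
      realizes B d A M C x y \<longrightarrow> realizes B d' A' M' C' x' y' \<longrightarrow>
      a \<in> Hom B A A' \<longrightarrow> b \<in> Hom B M M' \<longrightarrow> Cmp B b x = Cmp B x' a \<longrightarrow>
      (\<exists>c\<in>Hom B C C'. Cmp B c y = Cmp B y' b \<and> Push B a d = Pull B c d'))"

definition ET3op :: "('o,'m,'e) extri \<Rightarrow> bool" where
"ET3op B \<longleftrightarrow>
  (\<forall>d d' A M C x y A' M' C' x' y' b c.
      realizes B d A M C x y \<longrightarrow> realizes B d' A' M' C' x' y' \<longrightarrow>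
      b \<in> Hom B M M' \<longrightarrow> c \<in> Hom B C C' \<longrightarrow> Cmp B y' b = Cmp B c y \<longrightarrow>
      (\<exists>a\<in>Hom B A A'. Cmp B x' a = Cmp B b x \<and> Push B a d = Pull B c d'))"

definition ET4 :: "('o,'m,'e) extri \<Rightarrow> bool" where
"ET4 B \<longleftrightarrow>
  (\<forall>d d' A Bo C D F f f' g g'.
      realizes B d A Bo D f f' \<longrightarrow> realizes B d' Bo C F g g' \<longrightarrow>
      (\<exists>Eo h h' dm e d''. dm \<in> Hom B D Eo \<and> e \<in> Hom B Eo F \<and>
          realizes B d'' A C Eo h h' \<and>
          h = Cmp B g f \<and> Cmp B h' g = Cmp B dm f' \<and> Cmp B e h' = g' \<and>
          realizes B (Push B f' d') D Eo F dm e \<and>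
          Pull B dm d'' = d \<and>
          Push B f d'' = Pull B e d'))"

definition ET4op :: "('o,'m,'e) extri \<Rightarrow> bool" where
"ET4op B \<longleftrightarrow>
  (\<forall>d d' D A Bo C F f' f g' g.
      realizes B d D A Bo f' f \<longrightarrow> realizes B d' F Bo C g' g \<longrightarrow>
      (\<exists>Eo dm e h h' d''. dm \<in> Hom B D Eo \<and> e \<in> Hom B Eo F \<and>
          realizes B d'' Eo A C h' h \<and>
          realizes B (Pull B g' d) D Eo F dm e \<and>
          Cmp B h' dm = f' \<and> Cmp B f h' = Cmp B g' e \<and> h = Cmp B g f \<and>
          Push B e d'' = d' \<and>
          Push B dm d = Pull B g d''))"

definition extriangulated :: "('o,'m,'e) extri \<Rightarrow> bool" where
"extriangulated B \<longleftrightarrow> additive B \<and> ET1 B \<and> ET2 B \<and> ET3 B \<and> ET3op B \<and> ET4 B \<and> ET4op B"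

definition conflation :: "('o,'m,'e) extri \<Rightarrow> 'o \<Rightarrow> 'o \<Rightarrow> 'o \<Rightarrow> 'm \<Rightarrow> 'm \<Rightarrow> bool" where
"conflation B A M C x y \<longleftrightarrow> (\<exists>d. realizes B d A M C x y)"

definition projective :: "('o,'m,'e) extri \<Rightarrow> 'o \<Rightarrow> bool" where
"projective B P \<longleftrightarrow>
  (\<forall>A M C x y c. conflation B A M C x y \<longrightarrow> c \<in> Hom B P C \<longrightarrow>
      (\<exists>b\<in>Hom B P M. Cmp B y b = c))"

definition injective :: "('o,'m,'e) extri \<Rightarrow> 'o \<Rightarrow> bool" where
"injective B I \<longleftrightarrow>
  (\<forall>A M C x y a. conflation B A M C x y \<longrightarrow> a \<in> Hom B A I \<longrightarrow>
      (\<exists>b\<in>Hom B M I. Cmp B b x = a))"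

definition enough_projectives :: "('o,'m,'e) extri \<Rightarrow> bool" where
"enough_projectives B \<longleftrightarrow> (\<forall>C. \<exists>A P x y. projective B P \<and> conflation B A P C x y)"

definition enough_injectives :: "('o,'m,'e) extri \<Rightarrow> bool" where
"enough_injectives B \<longleftrightarrow> (\<forall>A. \<exists>I C x y. injective B I \<and> conflation B A I C x y)"

text \<open>A (full, additive) subcategory, given by its class of objects, closed under
  isomorphisms and finite direct sums (including the empty sum, a zero object).\<close>
definition subcategory :: "('o,'m,'e) extri \<Rightarrow> 'o set \<Rightarrow> bool" where
"subcategory B S \<longleftrightarrow>
  (\<forall>X Y f. X \<in> S \<longrightarrow> is_iso B X Y f \<longrightarrow> Y \<in> S) \<and>
  (\<exists>Z\<in>S. zero_obj B Z) \<and>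
  (\<forall>A1 A2 T i1 i2 p1 p2. biproduct B A1 A2 T i1 i2 p1 p2 \<longrightarrow> A1 \<in> S \<longrightarrow> A2 \<in> S \<longrightarrow> T \<in> S)"

definition perp1 :: "('o,'m,'e) extri \<Rightarrow> 'o set \<Rightarrow> 'o set" where
"perp1 B S = {M. \<forall>X\<in>S. Ext B X M = {Zeroe B X M}}"

definition rigid :: "('o,'m,'e) extri \<Rightarrow> 'o set \<Rightarrow> bool" where
"rigid B S \<longleftrightarrow> (\<forall>X\<in>S. \<forall>Y\<in>S. Ext B X Y = {Zeroe B X Y})"

definition contravariantly_finite :: "('o,'m,'e) extri \<Rightarrow> 'o set \<Rightarrow> bool" where
"contravariantly_finite B S \<longleftrightarrow>
  (\<forall>M. \<exists>X\<in>S. \<exists>f\<in>Hom B X M. \<forall>X'\<in>S. \<forall>g\<in>Hom B X' M. \<exists>h\<in>Hom B X' X. Cmp B f h = g)"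

definition summand_closed :: "('o,'m,'e) extri \<Rightarrow> 'o set \<Rightarrow> bool" where
"summand_closed B S \<longleftrightarrow>
  (\<forall>A1 A2 T i1 i2 p1 p2. biproduct B A1 A2 T i1 i2 p1 p2 \<longrightarrow> T \<in> S \<longrightarrow> A1 \<in> S \<and> A2 \<in> S)"

definition RCP :: "('o,'m,'e) extri \<Rightarrow> 'o set \<Rightarrow> bool" where
"RCP B S \<longleftrightarrow> subcategory B S \<and> {P. projective B P} \<subseteq> S \<and> rigid B S \<and>
   contravariantly_finite B S \<and> summand_closed B S"

definition heart_objs :: "('o,'m,'e) extri \<Rightarrow> 'o set \<Rightarrow> 'o set \<Rightarrow> 'o set" where
"heart_objs B U V = {M.
   (\<exists>VM UM x y. conflation B VM UM M x y \<and> VM \<in> V \<and> UM \<in> U \<inter> V) \<and>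
   (\<exists>VM UM x y. conflation B M VM UM x y \<and> VM \<in> U \<inter> V \<and> UM \<in> U)}"

definition factors_through :: "('o,'m,'e) extri \<Rightarrow> 'o set \<Rightarrow> 'o \<Rightarrow> 'o \<Rightarrow> 'm \<Rightarrow> bool" where
"factors_through B S X Y f \<longleftrightarrow>
  (\<exists>W\<in>S. \<exists>g\<in>Hom B X W. \<exists>h\<in>Hom B W Y. f = Cmp B h g)"

text \<open>f in Hom Y X induces an epimorphism in the ideal quotient Hh/S:
  for g,h : X -> Z with Z in Hh, if g f and h f agree modulo morphisms factoring
  through S, then so do g and h.\<close>
definition quotient_epi :: "('o,'m,'e) extri \<Rightarrow> 'o set \<Rightarrow> 'o set \<Rightarrow> 'o \<Rightarrow> 'o \<Rightarrow> 'm \<Rightarrow> bool" where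
"quotient_epi B Hh S Y X f \<longleftrightarrow>
  (\<forall>Z\<in>Hh. \<forall>g\<in>Hom B X Z. \<forall>h\<in>Hom B X Z.
     factors_through B S Y Z (Addm B (Cmp B g f) (Negm B (Cmp B h f))) \<longrightarrow>
     factors_through B S X Z (Addm B g (Negm B h)))"

end

theory Submission
  imports Defs
begin

text \<open>
  Let \<open>Y \<rightarrowtail> V\<^sub>Y \<twoheadrightarrow> U\<^sub>Y\<close> be the conflation witnessing \<open>Y \<in> \<H>\<close>, with extension \<open>\<epsilon>\<^sub>Y\<close>.
  Because \<open>X \<in> \<H>\<close>, the pushout \<open>f\<^sub>*\<epsilon>\<^sub>Y\<close> is a pullback \<open>u\<^sup>*\<epsilon>\<close> of the extension of a conflation
  \<open>X \<rightarrowtail> V\<^sub>X \<twoheadrightarrow> U\<^sub>X\<close>, and the homotopy pullback realizes it by a conflation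
  \<open>X \<rightarrowtail>\<^sup>d E \<twoheadrightarrow> U\<^sub>Y\<close> with \<open>E \<in> \<H>\<close>. The composite \<open>d f\<close> factors through \<open>V\<^sub>Y \<in> \<C>\<close>, so it vanishes
  in \<open>\<H>/\<C>\<close>; as \<open>f\<close> is an epimorphism there, \<open>d\<close> itself factors through \<open>\<C>\<close>, and \<open>\<C>\<close> is rigid, so
  \<open>d\<^sub>*\<close> kills \<open>E(D, X)\<close> for \<open>D \<in> \<D>\<close>. By exactness every \<open>\<delta> \<in> E(D, X)\<close> is then
  \<open>c\<^sup>*(f\<^sub>*\<epsilon>\<^sub>Y) = f\<^sub>*(c\<^sup>*\<epsilon>\<^sub>Y)\<close>, which is zero because \<open>Y \<in> \<D>\<^sup>\<perp>\<^sup>1\<close>.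
\<close>

locale abelian_group_on =
  fixes G :: "'a set" and add :: "'a \<Rightarrow> 'a \<Rightarrow> 'a" and zero :: 'a and neg :: "'a \<Rightarrow> 'a"
  assumes zero_closed: "zero \<in> G"
    and add_closed: "a \<in> G \<Longrightarrow> b \<in> G \<Longrightarrow> add a b \<in> G"
    and neg_closed: "a \<in> G \<Longrightarrow> neg a \<in> G"
    and add_assoc: "a \<in> G \<Longrightarrow> b \<in> G \<Longrightarrow> c \<in> G \<Longrightarrow> add (add a b) c = add a (add b c)"
    and add_commute: "a \<in> G \<Longrightarrow> b \<in> G \<Longrightarrow> add a b = add b a"
    and add_zero_left: "a \<in> G \<Longrightarrow> add zero a = a"
    and add_neg_left: "a \<in> G \<Longrightarrow> add (neg a) a = zero"
begin

lemma add_zero_right: "a \<in> G \<Longrightarrow> add a zero = a"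
  using add_commute add_zero_left zero_closed by metis

lemma add_neg_right: "a \<in> G \<Longrightarrow> add a (neg a) = zero"
  using add_commute add_neg_left neg_closed by metis

lemma idempotent_eq_zero:
  assumes "a \<in> G" and "add a a = a"
  shows "a = zero"
proof -
  have "a = add (add (neg a) a) a" using assms add_neg_left add_zero_left by simp
  also have "\<dots> = add (neg a) a" using assms add_assoc neg_closed by simp
  finally show ?thesis using assms add_neg_left by simp
qed

lemma neg_unique:
  assumes "a \<in> G" "b \<in> G" and "add a b = zero"
  shows "a = neg b"
proof -
  have "a = add a (add b (neg b))" using assms add_neg_right add_zero_right by simp
  also have "\<dots> = neg b" using assms add_assoc[of a b "neg b"] neg_closed add_zero_left by simp
  finally show ?thesis .
qed

lemma neg_zero: "neg zero = zero"
  using neg_unique[OF zero_closed zero_closed] add_zero_left zero_closed by simp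

lemma neg_neg: "a \<in> G \<Longrightarrow> neg (neg a) = a"
  using neg_unique[symmetric, of a "neg a"] add_neg_right neg_closed by simp

end


lemma realizesD:
  assumes "realizes B d A M C x y"
  shows "d \<in> Ext B C A" and "x \<in> Hom B A M" and "y \<in> Hom B M C"
  using assms by (simp_all add: realizes_def)

lemma biproductD:
  assumes "biproduct B A1 A2 S i1 i2 p1 p2"
  shows "i1 \<in> Hom B A1 S" and "i2 \<in> Hom B A2 S" and "p1 \<in> Hom B S A1" and "p2 \<in> Hom B S A2"
    and "Cmp B p1 i1 = Idm B A1" and "Cmp B p2 i2 = Idm B A2"
    and "Cmp B p2 i1 = Zerom B A1 A2" and "Cmp B p1 i2 = Zerom B A2 A1"
    and "Addm B (Cmp B i1 p1) (Cmp B i2 p2) = Idm B S"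
  using assms by (simp_all add: biproduct_def)

locale extriangulated_category =
  fixes B :: "('o,'m,'e) extri"
  assumes extriangulated: "extriangulated B"
begin

lemma additive: "additive B"
  and ET1: "ET1 B" and ET2: "ET2 B" and ET3: "ET3 B" and ET3op: "ET3op B" and ET4op: "ET4op B"
  using extriangulated by (simp_all add: extriangulated_def)

lemma category: "category B" and preadditive: "preadditive B"
  using additive by (simp_all add: additive_def)

lemma hom_comp: "f \<in> Hom B X Y \<Longrightarrow> g \<in> Hom B Y Z \<Longrightarrow> Cmp B g f \<in> Hom B X Z"
  using category unfolding category_def by blast

lemma hom_id [simp]: "Idm B X \<in> Hom B X X"
  using category by (simp add: category_def)

lemma comp_id_left: "f \<in> Hom B X Y \<Longrightarrow> Cmp B (Idm B Y) f = f"
  using category unfolding category_def by blast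

lemma comp_id_right: "f \<in> Hom B X Y \<Longrightarrow> Cmp B f (Idm B X) = f"
  using category unfolding category_def by blast

lemma comp_assoc: "f \<in> Hom B W X \<Longrightarrow> g \<in> Hom B X Y \<Longrightarrow> h \<in> Hom B Y Z \<Longrightarrow>
    Cmp B h (Cmp B g f) = Cmp B (Cmp B h g) f"
  using category unfolding category_def by blast

lemma hom_abelian_group: "abelian_group_on (Hom B X Y) (Addm B) (Zerom B X Y) (Negm B)"
  using preadditive[unfolded preadditive_def, THEN conjunct1, THEN spec[of _ X], THEN spec[of _ Y]]
  by unfold_locales blast+

lemma comp_add_right: "f \<in> Hom B X Y \<Longrightarrow> f' \<in> Hom B X Y \<Longrightarrow> g \<in> Hom B Y Z \<Longrightarrow>
    Cmp B g (Addm B f f') = Addm B (Cmp B g f) (Cmp B g f')"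
  using preadditive by (simp add: preadditive_def)

lemma comp_add_left: "f \<in> Hom B X Y \<Longrightarrow> g \<in> Hom B Y Z \<Longrightarrow> g' \<in> Hom B Y Z \<Longrightarrow>
    Cmp B (Addm B g g') f = Addm B (Cmp B g f) (Cmp B g' f)"
  using preadditive by (simp add: preadditive_def)

lemmas hom_zero [simp] = abelian_group_on.zero_closed[OF hom_abelian_group]
lemmas hom_add = abelian_group_on.add_closed[OF hom_abelian_group]
lemmas hom_neg = abelian_group_on.neg_closed[OF hom_abelian_group]
lemmas hom_add_assoc = abelian_group_on.add_assoc[OF hom_abelian_group]
lemmas hom_add_commute = abelian_group_on.add_commute[OF hom_abelian_group]
lemmas hom_add_zero_left = abelian_group_on.add_zero_left[OF hom_abelian_group]
lemmas hom_add_zero_right = abelian_group_on.add_zero_right[OF hom_abelian_group]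
lemmas hom_add_neg_left = abelian_group_on.add_neg_left[OF hom_abelian_group]
lemmas hom_add_neg_right = abelian_group_on.add_neg_right[OF hom_abelian_group]
lemmas hom_neg_zero = abelian_group_on.neg_zero[OF hom_abelian_group]
lemmas hom_neg_neg = abelian_group_on.neg_neg[OF hom_abelian_group]

lemma comp_zero_right: "g \<in> Hom B Y Z \<Longrightarrow> Cmp B g (Zerom B X Y) = Zerom B X Z"
  using comp_add_right[OF hom_zero hom_zero, of g] hom_add_zero_left[OF hom_zero]
    abelian_group_on.idempotent_eq_zero[OF hom_abelian_group hom_comp[OF hom_zero]]
  by metis

lemma comp_zero_left: "f \<in> Hom B X Y \<Longrightarrow> Cmp B (Zerom B Y Z) f = Zerom B X Z"
  using comp_add_left[OF _ hom_zero hom_zero, of f] hom_add_zero_left[OF hom_zero]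
    abelian_group_on.idempotent_eq_zero[OF hom_abelian_group hom_comp[OF _ hom_zero]]
  by metis

lemma ext_abelian_group: "abelian_group_on (Ext B C A) (Adde B) (Zeroe B C A) (Nege B)"
  using ET1[unfolded ET1_def, THEN conjunct1, THEN spec[of _ C], THEN spec[of _ A]]
  by unfold_locales blast+

lemma push_ext: "a \<in> Hom B A A' \<Longrightarrow> d \<in> Ext B C A \<Longrightarrow> Push B a d \<in> Ext B C A'"
  using ET1 by (simp add: ET1_def)

lemma pull_ext: "c \<in> Hom B C' C \<Longrightarrow> d \<in> Ext B C A \<Longrightarrow> Pull B c d \<in> Ext B C' A"
  using ET1 by (simp add: ET1_def)

lemma push_id: "d \<in> Ext B C A \<Longrightarrow> Push B (Idm B A) d = d"
  using ET1 by (simp add: ET1_def)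

lemma pull_id: "d \<in> Ext B C A \<Longrightarrow> Pull B (Idm B C) d = d"
  using ET1 by (simp add: ET1_def)

lemma push_comp: "a \<in> Hom B A A' \<Longrightarrow> a' \<in> Hom B A' A'' \<Longrightarrow> d \<in> Ext B C A \<Longrightarrow>
    Push B (Cmp B a' a) d = Push B a' (Push B a d)"
  using ET1 by (simp add: ET1_def)

lemma pull_comp: "c \<in> Hom B C' C \<Longrightarrow> c' \<in> Hom B C'' C' \<Longrightarrow> d \<in> Ext B C A \<Longrightarrow>
    Pull B (Cmp B c c') d = Pull B c' (Pull B c d)"
  using ET1 by (simp add: ET1_def)

lemma push_pull: "a \<in> Hom B A A' \<Longrightarrow> c \<in> Hom B C' C \<Longrightarrow> d \<in> Ext B C A \<Longrightarrow>
    Push B a (Pull B c d) = Pull B c (Push B a d)"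
  using ET1 by (simp add: ET1_def)

lemma push_add: "a \<in> Hom B A A' \<Longrightarrow> d \<in> Ext B C A \<Longrightarrow> e \<in> Ext B C A \<Longrightarrow>
    Push B a (Adde B d e) = Adde B (Push B a d) (Push B a e)"
  using ET1 by (simp add: ET1_def)

lemma pull_add: "c \<in> Hom B C' C \<Longrightarrow> d \<in> Ext B C A \<Longrightarrow> e \<in> Ext B C A \<Longrightarrow>
    Pull B c (Adde B d e) = Adde B (Pull B c d) (Pull B c e)"
  using ET1 by (simp add: ET1_def)

lemmas ext_zero [simp] = abelian_group_on.zero_closed[OF ext_abelian_group]
lemmas ext_add_zero_left = abelian_group_on.add_zero_left[OF ext_abelian_group]
lemmas ext_add_zero_right = abelian_group_on.add_zero_right[OF ext_abelian_group]

lemma push_zero: "a \<in> Hom B A A' \<Longrightarrow> Push B a (Zeroe B C A) = Zeroe B C A'"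
  using push_add[OF _ ext_zero ext_zero, of a] ext_add_zero_left[OF ext_zero]
    abelian_group_on.idempotent_eq_zero[OF ext_abelian_group push_ext[OF _ ext_zero]]
  by metis

lemma pull_zero: "c \<in> Hom B C' C \<Longrightarrow> Pull B c (Zeroe B C A) = Zeroe B C' A"
  using pull_add[OF _ ext_zero ext_zero, of c] ext_add_zero_left[OF ext_zero]
    abelian_group_on.idempotent_eq_zero[OF ext_abelian_group pull_ext[OF _ ext_zero]]
  by metis

lemma realizes_exists: "d \<in> Ext B C A \<Longrightarrow> \<exists>M x y. realizes B d A M C x y"
  using ET2[unfolded ET2_def, THEN conjunct2, THEN conjunct1] by blast

lemma realizes_seq_equiv:
  "realizes B d A M C x y \<Longrightarrow> x' \<in> Hom B A M' \<Longrightarrow> y' \<in> Hom B M' C \<Longrightarrow>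
    seq_equiv B M M' C x y x' y' \<Longrightarrow> realizes B d A M' C x' y'"
  using ET2[unfolded ET2_def, THEN conjunct2, THEN conjunct2, THEN conjunct2, THEN conjunct1]
  unfolding realizes_def by blast

lemma realizes_lift:
  "realizes B d A M C x y \<Longrightarrow> realizes B d' A' M' C' x' y' \<Longrightarrow>
    a \<in> Hom B A A' \<Longrightarrow> c \<in> Hom B C C' \<Longrightarrow> Push B a d = Pull B c d' \<Longrightarrow>
    \<exists>b\<in>Hom B M M'. Cmp B b x = Cmp B x' a \<and> Cmp B y' b = Cmp B c y"
  using ET2[unfolded ET2_def, THEN conjunct2, THEN conjunct2, THEN conjunct2, THEN conjunct2,
      THEN conjunct1]
  by blast

lemma realizes_split:
  assumes "biproduct B A C S i1 i2 p1 p2"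
  shows "realizes B (Zeroe B C A) A S C i1 p2"
proof -
  have "Real B (Zeroe B C A) i1 p2"
    using assms ET2[unfolded ET2_def, THEN conjunct2, THEN conjunct2, THEN conjunct2,
        THEN conjunct2, THEN conjunct2, THEN conjunct1]
    by blast
  then show ?thesis
    using assms by (simp add: realizes_def biproduct_def)
qed

lemma ET3_rule:
  "realizes B d A M C x y \<Longrightarrow> realizes B d' A' M' C' x' y' \<Longrightarrow>
    a \<in> Hom B A A' \<Longrightarrow> b \<in> Hom B M M' \<Longrightarrow> Cmp B b x = Cmp B x' a \<Longrightarrow>
    \<exists>c\<in>Hom B C C'. Cmp B c y = Cmp B y' b \<and> Push B a d = Pull B c d'"
  using ET3 unfolding ET3_def by blast

lemma ET3op_rule:
  "realizes B d A M C x y \<Longrightarrow> realizes B d' A' M' C' x' y' \<Longrightarrow>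
    b \<in> Hom B M M' \<Longrightarrow> c \<in> Hom B C C' \<Longrightarrow> Cmp B y' b = Cmp B c y \<Longrightarrow>
    \<exists>a\<in>Hom B A A'. Cmp B x' a = Cmp B b x \<and> Push B a d = Pull B c d'"
  using ET3op unfolding ET3op_def by blast

lemma ET4op_rule:
  "realizes B d D A M f' f \<Longrightarrow> realizes B d' F M C g' g \<Longrightarrow>
    \<exists>E dm e h h' d''. dm \<in> Hom B D E \<and> e \<in> Hom B E F \<and>
      realizes B d'' E A C h' h \<and> realizes B (Pull B g' d) D E F dm e \<and>
      Cmp B h' dm = f' \<and> Cmp B f h' = Cmp B g' e \<and> h = Cmp B g f \<and>
      Push B e d'' = d' \<and> Push B dm d = Pull B g d''"
  using ET4op unfolding ET4op_def by blast

lemma biproduct_exists: "\<exists>S i1 i2 p1 p2. biproduct B A1 A2 S i1 i2 p1 p2"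
  and zero_object_exists: "\<exists>Z. zero_obj B Z"
  using additive unfolding additive_def by blast+

lemma biproduct_swap: "biproduct B A1 A2 S i1 i2 p1 p2 \<Longrightarrow> biproduct B A2 A1 S i2 i1 p2 p1"
  unfolding biproduct_def using hom_add_commute hom_comp by metis

lemma biproduct_zero_right:
  "zero_obj B Z \<Longrightarrow> biproduct B A Z A (Idm B A) (Zerom B Z A) (Idm B A) (Zerom B A Z)"
  unfolding biproduct_def zero_obj_def
  by (simp add: comp_id_left[OF hom_id] comp_id_left[OF hom_zero] comp_zero_left[OF hom_id]
      comp_zero_left[OF hom_zero] hom_add_zero_right)

lemma extend_along_inflation:
  assumes eps: "realizes B \<epsilon> A M C x y" and a: "a \<in> Hom B A V"
    and push: "Push B a \<epsilon> = Zeroe B C V"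
  shows "\<exists>m\<in>Hom B M V. Cmp B m x = a"
proof -
  obtain S i1 i2 p1 p2 where S: "biproduct B V C S i1 i2 p1 p2"
    using biproduct_exists by blast
  note i1 = biproductD(1)[OF S] and p1 = biproductD(3)[OF S]
  have x: "x \<in> Hom B A M" using realizesD[OF eps] by blast
  have "Push B a \<epsilon> = Pull B (Idm B C) (Zeroe B C V)"
    using push pull_id[OF ext_zero] by simp
  then obtain n where n: "n \<in> Hom B M S" and nx: "Cmp B n x = Cmp B i1 a"
    using realizes_lift[OF eps realizes_split[OF S] a hom_id] by blast
  have "Cmp B (Cmp B p1 n) x = Cmp B (Cmp B p1 i1) a"
    using nx comp_assoc[OF x n p1] comp_assoc[OF a i1 p1] by simp
  also have "\<dots> = a"
    using biproductD(5)[OF S] comp_id_left[OF a] by simp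
  finally show ?thesis
    using hom_comp[OF n p1] by blast
qed

lemma push_inflation_zero_imp_pull:
  assumes \<theta>: "realizes B \<theta> A M C x y" and \<delta>: "\<delta> \<in> Ext B D A"
    and push: "Push B x \<delta> = Zeroe B D M"
  shows "\<exists>c\<in>Hom B D C. \<delta> = Pull B c \<theta>"
proof -
  obtain N x' y' where \<delta>': "realizes B \<delta> A N D x' y'"
    using realizes_exists[OF \<delta>] by blast
  obtain n where n: "n \<in> Hom B N M" and nx: "Cmp B n x' = x"
    using extend_along_inflation[OF \<delta>' realizesD(2)[OF \<theta>] push] by blast
  have "Cmp B n x' = Cmp B x (Idm B A)"
    using nx comp_id_right[OF realizesD(2)[OF \<theta>]] by simp
  then obtain c where "c \<in> Hom B D C" and "Push B (Idm B A) \<delta> = Pull B c \<theta>"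
    using ET3_rule[OF \<delta>' \<theta> hom_id n] by blast
  then show ?thesis
    using push_id[OF \<delta>] by auto
qed

lemma pull_deflation_zero:
  assumes \<theta>: "realizes B \<theta> A M C x y"
  shows "Pull B y \<theta> = Zeroe B M A"
proof -
  obtain S i1 i2 p1 p2 where S: "biproduct B A M S i1 i2 p1 p2"
    using biproduct_exists by blast
  obtain a where "a \<in> Hom B A A" and "Push B a (Zeroe B M A) = Pull B y \<theta>"
    using ET3op_rule[OF realizes_split[OF S] \<theta> biproductD(4)[OF S] realizesD(3)[OF \<theta>]] by blast
  then show ?thesis
    using push_zero by metis
qed

end

section \<open>Homotopy pullbacks\<close>

text \<open>For a biproduct \<open>S = A \<oplus> C\<close> this is the elementary automorphism \<open>(1 0; t 1)\<close> of \<open>S\<close>.\<close>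

definition shear :: "('o,'m,'e) extri \<Rightarrow> 'o \<Rightarrow> 'm \<Rightarrow> 'm \<Rightarrow> 'm \<Rightarrow> 'm" where
  "shear B S i t p = Addm B (Idm B S) (Cmp B i (Cmp B t p))"

context extriangulated_category
begin

context
  fixes A C S i1 i2 p1 p2
  assumes S: "biproduct B A C S i1 i2 p1 p2"
begin

private lemmas i1 = biproductD(1)[OF S] and i2 = biproductD(2)[OF S]
  and p1 = biproductD(3)[OF S] and p2 = biproductD(4)[OF S]

lemma shear_hom: "t \<in> Hom B A C \<Longrightarrow> shear B S i2 t p1 \<in> Hom B S S"
  unfolding shear_def using hom_add[OF hom_id hom_comp[OF hom_comp[OF p1] i2]] .

lemma shear_comp:
  assumes s: "s \<in> Hom B A C" and s': "s' \<in> Hom B A C"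
  shows "Cmp B (shear B S i2 s p1) (shear B S i2 s' p1) = shear B S i2 (Addm B s s') p1"
proof -
  define E where "E t = Cmp B i2 (Cmp B t p1)" for t
  have E: "E t \<in> Hom B S S" if "t \<in> Hom B A C" for t
    unfolding E_def using hom_comp[OF hom_comp[OF p1 that] i2] .
  have "Cmp B (Cmp B s p1) (E s') = Cmp B s (Cmp B (Cmp B p1 i2) (Cmp B s' p1))"
    unfolding E_def using comp_assoc[OF hom_comp[OF p1 s'] i2 p1] comp_assoc[OF E[OF s'] p1 s]
    by (simp add: E_def)
  also have "\<dots> = Zerom B S C"
    using biproductD(8)[OF S] comp_zero_left[OF hom_comp[OF p1 s']] comp_zero_right[OF s] by simp
  finally have EE: "Cmp B (E s) (E s') = Zerom B S S"
    using comp_assoc[OF E[OF s'] hom_comp[OF p1 s] i2] comp_zero_right[OF i2] by (simp add: E_def)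
  have "Cmp B (Addm B (Idm B S) (E s)) (Addm B (Idm B S) (E s'))
      = Addm B (Addm B (Idm B S) (E s)) (Addm B (E s') (Cmp B (E s) (E s')))"
    using comp_add_right[OF hom_id E[OF s'] hom_add[OF hom_id E[OF s]]]
      comp_add_left[OF E[OF s'] hom_id E[OF s]] comp_id_right[OF hom_add[OF hom_id E[OF s]]]
      comp_id_left[OF E[OF s']]
    by simp
  also have "\<dots> = Addm B (Idm B S) (Addm B (E s) (E s'))"
    using EE hom_add_zero_right[OF E[OF s']] hom_add_assoc[OF hom_id E[OF s] E[OF s']] by simp
  also have "Addm B (E s) (E s') = E (Addm B s s')"
    unfolding E_def using comp_add_right[OF hom_comp[OF p1 s] hom_comp[OF p1 s'] i2]
      comp_add_left[OF p1 s s'] by simp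
  finally show ?thesis
    unfolding shear_def E_def .
qed

lemma shear_zero: "shear B S i2 (Zerom B A C) p1 = Idm B S"
  unfolding shear_def using comp_zero_left[OF p1] comp_zero_right[OF i2] hom_add_zero_right[OF hom_id]
  by simp

lemma shear_injection: "t \<in> Hom B A C \<Longrightarrow> Cmp B p2 (Cmp B (shear B S i2 t p1) i1) = t"
proof -
  assume t: "t \<in> Hom B A C"
  have "Cmp B (shear B S i2 t p1) i1 = Addm B i1 (Cmp B i2 t)"
    unfolding shear_def
    using comp_add_left[OF i1 hom_id hom_comp[OF hom_comp[OF p1 t] i2]] comp_id_left[OF i1]
      comp_assoc[OF i1 hom_comp[OF p1 t] i2] comp_assoc[OF i1 p1 t] biproductD(5)[OF S]
      comp_id_right[OF t]
    by simp
  then show ?thesis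
    using comp_add_right[OF i1 hom_comp[OF t i2] p2] comp_assoc[OF t i2 p2] biproductD(6,7)[OF S]
      comp_id_left[OF t] hom_add_zero_left[OF t]
    by simp
qed

lemma realizes_shear_split:
  assumes t: "t \<in> Hom B A C"
  shows "realizes B (Zeroe B C A) A S C
    (Cmp B (shear B S i2 t p1) i1) (Cmp B p2 (shear B S i2 (Negm B t) p1))"
proof -
  note \<phi> = shear_hom[OF t] and \<psi> = shear_hom[OF hom_neg[OF t]]
  have "Cmp B (shear B S i2 t p1) (shear B S i2 (Negm B t) p1) = Idm B S"
    and "Cmp B (shear B S i2 (Negm B t) p1) (shear B S i2 t p1) = Idm B S"
    using shear_comp[OF t hom_neg[OF t]] shear_comp[OF hom_neg[OF t] t]
      hom_add_neg_right[OF t] hom_add_neg_left[OF t] shear_zero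
    by simp_all
  then have "is_iso B S S (shear B S i2 t p1)"
    and "Cmp B (Cmp B p2 (shear B S i2 (Negm B t) p1)) (shear B S i2 t p1) = p2"
    unfolding is_iso_def using \<phi> \<psi> comp_assoc[OF \<phi> \<psi> p2] comp_id_right[OF p2] by auto
  then have "seq_equiv B S S C i1 p2
      (Cmp B (shear B S i2 t p1) i1) (Cmp B p2 (shear B S i2 (Negm B t) p1))"
    unfolding seq_equiv_def by blast
  then show ?thesis
    using realizes_seq_equiv[OF realizes_split[OF S] hom_comp[OF i1 \<phi>] hom_comp[OF \<psi> p2]] by blast
qed

end

lemma realizes_direct_sum_identity:
  assumes \<epsilon>: "realizes B \<epsilon> A M C x y"
    and SM: "biproduct B M K SM a1 a2 b1 b2" and SC: "biproduct B C K SC c1 c2 e1 e2"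
  shows "realizes B (Pull B e1 \<epsilon>) A SM SC (Cmp B a1 x)
    (Addm B (Cmp B c1 (Cmp B y b1)) (Cmp B c2 b2))"
proof -
  obtain Z where Z: "zero_obj B Z"
    using zero_object_exists by blast
  \<comment> \<open>additivity of the realization, applied to \<open>\<epsilon>\<close> and \<open>0 \<rightarrowtail> K \<twoheadrightarrow> K\<close>, using \<open>A \<oplus> 0 = A\<close>\<close>
  have "Real B (Adde B (Push B (Idm B A) (Pull B e1 \<epsilon>)) (Push B (Zerom B Z A) (Pull B e2 (Zeroe B K Z))))
      (Addm B (Cmp B a1 (Cmp B x (Idm B A))) (Cmp B a2 (Cmp B (Zerom B Z K) (Zerom B A Z))))
      (Addm B (Cmp B c1 (Cmp B y b1)) (Cmp B c2 (Cmp B (Idm B K) b2)))"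
    using ET2[unfolded ET2_def, THEN conjunct2, THEN conjunct2, THEN conjunct2, THEN conjunct2,
        THEN conjunct2, THEN conjunct2, rule_format,
        OF \<epsilon> realizes_split[OF biproduct_swap[OF biproduct_zero_right[OF Z]]]
          biproduct_zero_right[OF Z] SM SC] .
  moreover note \<epsilon>E = realizesD(1)[OF \<epsilon>] and x = realizesD(2)[OF \<epsilon>] and y = realizesD(3)[OF \<epsilon>]
    and a1 = biproductD(1)[OF SM] and a2 = biproductD(2)[OF SM]
    and b1 = biproductD(3)[OF SM] and b2 = biproductD(4)[OF SM]
    and c1 = biproductD(1)[OF SC] and c2 = biproductD(2)[OF SC]
    and e1 = biproductD(3)[OF SC] and e2 = biproductD(4)[OF SC]
  moreover have "Adde B (Push B (Idm B A) (Pull B e1 \<epsilon>)) (Push B (Zerom B Z A) (Pull B e2 (Zeroe B K Z)))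
      = Pull B e1 \<epsilon>"
    using push_id[OF pull_ext[OF e1 \<epsilon>E]] pull_zero[OF e2] push_zero[OF hom_zero]
      ext_add_zero_right[OF pull_ext[OF e1 \<epsilon>E]]
    by simp
  moreover have "Addm B (Cmp B a1 (Cmp B x (Idm B A))) (Cmp B a2 (Cmp B (Zerom B Z K) (Zerom B A Z)))
      = Cmp B a1 x"
    using comp_id_right[OF x] comp_zero_right[OF hom_zero[of Z K], of A] comp_zero_right[OF a2]
      hom_add_zero_right[OF hom_comp[OF x a1]]
    by simp
  ultimately show ?thesis
    unfolding realizes_def
    using pull_ext[OF e1 \<epsilon>E] hom_comp[OF x a1] comp_id_left[OF b2]
      hom_add[OF hom_comp[OF hom_comp[OF b1 y] c1] hom_comp[OF b2 c2]]
    by simp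
qed

text \<open>(ET4op) applied to \<open>\<epsilon> \<oplus> (K = K)\<close> and to the split conflation \<open>K \<rightarrowtail> C \<oplus> K \<twoheadrightarrow> C\<close>
  sheared by \<open>u\<close>; the deflation of the second conflation obtained is \<open>(y, -u)\<close>.\<close>

lemma realizes_homotopy_pullback:
  assumes \<epsilon>: "realizes B \<epsilon> A M C x y" and u: "u \<in> Hom B K C"
    and SM: "biproduct B M K SM a1 a2 b1 b2"
  shows "\<exists>E d e \<delta> g h. realizes B (Pull B u \<epsilon>) A E K d e \<and> realizes B \<delta> E SM C g h
    \<and> Cmp B h a2 = Negm B u"
proof -
  obtain SC c1 c2 e1 e2 where SC: "biproduct B C K SC c1 c2 e1 e2"
    using biproduct_exists by blast
  note SC' = biproduct_swap[OF SC]
  define \<phi> where "\<phi> = shear B SC c1 u e2"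
  define \<psi> where "\<psi> = shear B SC c1 (Negm B u) e2"
  define s where "s = Addm B (Cmp B c1 (Cmp B y b1)) (Cmp B c2 b2)"
  have split: "realizes B (Zeroe B C K) K SC C (Cmp B \<phi> c2) (Cmp B e1 \<psi>)"
    unfolding \<phi>_def \<psi>_def by (rule realizes_shear_split[OF SC' u])
  obtain E d e \<delta> g h where E: "realizes B \<delta> E SM C g h"
    and pullback: "realizes B (Pull B (Cmp B \<phi> c2) (Pull B e1 \<epsilon>)) A E K d e"
    and h: "h = Cmp B (Cmp B e1 \<psi>) s"
    using ET4op_rule[OF realizes_direct_sum_identity[OF \<epsilon> SM SC, folded s_def] split] by blast
  note c2 = biproductD(2)[OF SC] and e1 = biproductD(3)[OF SC] and a2 = biproductD(2)[OF SM]
  have \<psi>: "\<psi> \<in> Hom B SC SC"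
    unfolding \<psi>_def by (rule shear_hom[OF SC' hom_neg[OF u]])
  have "Pull B (Cmp B \<phi> c2) (Pull B e1 \<epsilon>) = Pull B (Cmp B e1 (Cmp B \<phi> c2)) \<epsilon>"
    using pull_comp[OF e1 realizesD(2)[OF split] realizesD(1)[OF \<epsilon>]] by simp
  also have "\<dots> = Pull B u \<epsilon>"
    using shear_injection[OF SC' u] unfolding \<phi>_def by simp
  finally have "realizes B (Pull B u \<epsilon>) A E K d e"
    using pullback by simp
  moreover have "Cmp B s a2 = c2"
  proof -
    note b1 = biproductD(3)[OF SM] and b2 = biproductD(4)[OF SM] and c1 = biproductD(1)[OF SC]
      and y = realizesD(3)[OF \<epsilon>]
    have "Cmp B (Cmp B c1 (Cmp B y b1)) a2 = Zerom B K SC"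
      using comp_assoc[OF a2 hom_comp[OF b1 y] c1, symmetric] comp_assoc[OF a2 b1 y, symmetric]
        biproductD(8)[OF SM] comp_zero_right[OF y] comp_zero_right[OF c1]
      by simp
    moreover have "Cmp B (Cmp B c2 b2) a2 = c2"
      using comp_assoc[OF a2 b2 c2, symmetric] biproductD(6)[OF SM] comp_id_right[OF c2] by simp
    ultimately show ?thesis
      unfolding s_def using comp_add_left[OF a2 hom_comp[OF hom_comp[OF b1 y] c1] hom_comp[OF b2 c2]]
        hom_add_zero_left[OF c2]
      by simp
  qed
  then have "Cmp B h a2 = Negm B u"
    using h comp_assoc[OF a2 realizesD(3)[OF realizes_direct_sum_identity[OF \<epsilon> SM SC, folded s_def]]
        hom_comp[OF \<psi> e1]]
      comp_assoc[OF c2 \<psi> e1] shear_injection[OF SC' hom_neg[OF u], folded \<psi>_def]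
    by simp
  ultimately show ?thesis
    using E by blast
qed

end

section \<open>Objects of the heart\<close>

lemma rigid_subset_perp1: "rigid B S \<Longrightarrow> S \<subseteq> perp1 B S"
  unfolding rigid_def perp1_def by blast

lemma perp1_antimono: "T \<subseteq> S \<Longrightarrow> perp1 B S \<subseteq> perp1 B T"
  unfolding perp1_def by blast

lemma perp1D: "Y \<in> perp1 B S \<Longrightarrow> X \<in> S \<Longrightarrow> d \<in> Ext B X Y \<Longrightarrow> d = Zeroe B X Y"
  unfolding perp1_def by blast

lemma subcategory_biproduct:
  "subcategory B S \<Longrightarrow> biproduct B A1 A2 T i1 i2 p1 p2 \<Longrightarrow> A1 \<in> S \<Longrightarrow> A2 \<in> S \<Longrightarrow> T \<in> S"
  unfolding subcategory_def by blast

context extriangulated_category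
begin

lemma perp1I: "(\<And>X \<delta>. X \<in> S \<Longrightarrow> \<delta> \<in> Ext B X M \<Longrightarrow> \<delta> = Zeroe B X M) \<Longrightarrow> M \<in> perp1 B S"
  unfolding perp1_def by auto

lemma approximation_conflation:
  assumes rcp: "RCP B S" and enough: "enough_projectives B"
  shows "\<exists>V U x y. conflation B V U Z x y \<and> V \<in> perp1 B S \<and> U \<in> S"
proof -
  obtain K P k p \<rho> where P: "projective B P" and \<rho>: "realizes B \<rho> K P Z k p"
    using enough unfolding enough_projectives_def conflation_def by blast
  obtain U u where U: "U \<in> S" and u: "u \<in> Hom B U Z"
    and approx: "\<forall>X\<in>S. \<forall>c\<in>Hom B X Z. \<exists>s\<in>Hom B X U. Cmp B u s = c"
    using rcp unfolding RCP_def contravariantly_finite_def by blast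
  obtain SP a1 a2 b1 b2 where SP: "biproduct B P U SP a1 a2 b1 b2"
    using biproduct_exists by blast
  obtain E \<delta> g h where \<delta>: "realizes B \<delta> E SP Z g h" and ha2: "Cmp B h a2 = u"
    using realizes_homotopy_pullback[OF \<rho> hom_neg[OF u] SP] hom_neg_neg[OF u] by metis
  have SP_S: "SP \<in> S"
    using rcp P U subcategory_biproduct[OF _ SP] unfolding RCP_def by blast
  then have SP_perp: "SP \<in> perp1 B S"
    using rcp rigid_subset_perp1 unfolding RCP_def by blast
  have "E \<in> perp1 B S"
  proof (rule perp1I)
    fix X \<theta> assume X: "X \<in> S" and \<theta>: "\<theta> \<in> Ext B X E"
    have "Push B g \<theta> = Zeroe B X SP"
      using perp1D[OF SP_perp X push_ext[OF realizesD(2)[OF \<delta>] \<theta>]] .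
    then obtain c where c: "c \<in> Hom B X Z" and \<theta>c: "\<theta> = Pull B c \<delta>"
      using push_inflation_zero_imp_pull[OF \<delta> \<theta>] by blast
    obtain s where s: "s \<in> Hom B X U" and "Cmp B u s = c"
      using approx X c by blast
    then have "c = Cmp B h (Cmp B a2 s)"
      using ha2 comp_assoc[OF s biproductD(2)[OF SP] realizesD(3)[OF \<delta>]] by simp
    then have "\<theta> = Pull B (Cmp B a2 s) (Pull B h \<delta>)"
      using \<theta>c pull_comp[OF realizesD(3)[OF \<delta>] hom_comp[OF s biproductD(2)[OF SP]] realizesD(1)[OF \<delta>]]
      by simp
    then show "\<theta> = Zeroe B X E"
      using pull_deflation_zero[OF \<delta>] pull_zero[OF hom_comp[OF s biproductD(2)[OF SP]]] by simp
  qed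
  then show ?thesis
    using \<delta> SP_S unfolding conflation_def by blast
qed

lemma heart_objsI:
  assumes rcp: "RCP B S" and enough: "enough_projectives B"
    and E: "conflation B E M N g h" and "M \<in> S" and "N \<in> S"
  shows "E \<in> heart_objs B S (perp1 B S)"
  using approximation_conflation[OF rcp enough, of E] rigid_subset_perp1 assms
  unfolding heart_objs_def RCP_def by blast

lemma push_extension_in_heart:
  assumes rcp: "RCP B S" and enough: "enough_projectives B"
    and X: "X \<in> heart_objs B S (perp1 B S)" and \<theta>: "\<theta> \<in> Ext B K Y" and K: "K \<in> S"
    and f: "f \<in> Hom B Y X"
  shows "\<exists>E d e. E \<in> heart_objs B S (perp1 B S) \<and> realizes B (Push B f \<theta>) X E K d e"
proof -
  obtain V U x y \<epsilon> where \<epsilon>: "realizes B \<epsilon> X V U x y"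
    and V: "V \<in> S \<inter> perp1 B S" and U: "U \<in> S"
    using X unfolding heart_objs_def conflation_def by blast
  have "Push B (Cmp B x f) \<theta> = Zeroe B K V"
    using V perp1D[OF _ K push_ext[OF hom_comp[OF f realizesD(2)[OF \<epsilon>]] \<theta>]] by blast
  then have "Push B x (Push B f \<theta>) = Zeroe B K V"
    using push_comp[OF f realizesD(2)[OF \<epsilon>] \<theta>] by simp
  then obtain u where u: "u \<in> Hom B K U" and f\<theta>: "Push B f \<theta> = Pull B u \<epsilon>"
    using push_inflation_zero_imp_pull[OF \<epsilon> push_ext[OF f \<theta>]] by blast
  obtain SM a1 a2 b1 b2 where SM: "biproduct B V K SM a1 a2 b1 b2"
    using biproduct_exists by blast
  have "SM \<in> S"
    using rcp V K subcategory_biproduct[OF _ SM] unfolding RCP_def by blast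
  then show ?thesis
    using realizes_homotopy_pullback[OF \<epsilon> u SM] heart_objsI[OF rcp enough] U
    unfolding f\<theta> conflation_def by blast
qed

lemma quotient_epi_factors_through:
  assumes epi: "quotient_epi B H S Y X f" and f: "f \<in> Hom B Y X"
    and "Z \<in> H" and g: "g \<in> Hom B X Z" and "factors_through B S Y Z (Cmp B g f)"
  shows "factors_through B S X Z g"
proof -
  have "Addm B (Cmp B g f) (Negm B (Cmp B (Zerom B X Z) f)) = Cmp B g f"
    and "Addm B g (Negm B (Zerom B X Z)) = g"
    using comp_zero_left[OF f] hom_neg_zero hom_add_zero_right[OF hom_comp[OF f g]]
      hom_add_zero_right[OF g]
    by simp_all
  then show ?thesis
    using assms epi hom_zero[of X Z] unfolding quotient_epi_def by metis
qed

lemma perp1_of_push_realization: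
  assumes \<theta>: "\<theta> \<in> Ext B K Y" and f: "f \<in> Hom B Y X"
    and E: "realizes B (Push B f \<theta>) X E K d e" and "factors_through B T X E d"
    and "T \<subseteq> perp1 B D" and Y: "Y \<in> perp1 B D"
  shows "X \<in> perp1 B D"
proof (rule perp1I)
  obtain W j k where W: "W \<in> perp1 B D" and j: "j \<in> Hom B X W" and k: "k \<in> Hom B W E"
    and d: "d = Cmp B k j"
    using assms unfolding factors_through_def by blast
  fix D' \<delta> assume D': "D' \<in> D" and \<delta>: "\<delta> \<in> Ext B D' X"
  have "Push B d \<delta> = Zeroe B D' E"
    using d push_comp[OF j k \<delta>] perp1D[OF W D' push_ext[OF j \<delta>]] push_zero[OF k] by simp
  then obtain c where c: "c \<in> Hom B D' K" and "\<delta> = Pull B c (Push B f \<theta>)"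
    using push_inflation_zero_imp_pull[OF E \<delta>] by blast
  then have "\<delta> = Push B f (Pull B c \<theta>)"
    using push_pull[OF f c \<theta>] by simp
  then show "\<delta> = Zeroe B D' X"
    using perp1D[OF Y D' pull_ext[OF c \<theta>]] push_zero[OF f] by simp
qed

end

theorem mainTheorem11:
  fixes B :: "('o,'m,'e) extri" and \<C> \<D> :: "'o set" and X Y :: 'o and f :: 'm
  assumes "extriangulated B"
    and "enough_projectives B" and "enough_injectives B"
    and "RCP B \<D>" and "RCP B \<C>" and "\<D> \<subseteq> \<C>"
    and "X \<in> heart_objs B \<C> (perp1 B \<C>)" and "Y \<in> heart_objs B \<C> (perp1 B \<C>)"
    and "f \<in> Hom B Y X"
    and "quotient_epi B (heart_objs B \<C> (perp1 B \<C>)) \<C> Y X f"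
    and "Y \<in> perp1 B \<D>"
  shows "X \<in> perp1 B \<D>"
proof -
  interpret extriangulated_category B by (rule extriangulated_category.intro) fact
  note rcp = assms(5) and enough = assms(2) and f = assms(9)
  have C_perp: "\<C> \<subseteq> perp1 B \<D>"
    using rigid_subset_perp1 perp1_antimono[OF assms(6)] rcp unfolding RCP_def by blast
  obtain V U x y \<epsilon> where \<epsilon>: "realizes B \<epsilon> Y V U x y" and V: "V \<in> \<C>" and U: "U \<in> \<C>"
    using assms(8) unfolding heart_objs_def conflation_def by blast
  obtain E d e where E: "E \<in> heart_objs B \<C> (perp1 B \<C>)"
    and d: "realizes B (Push B f \<epsilon>) X E U d e"
    using push_extension_in_heart[OF rcp enough assms(7) realizesD(1)[OF \<epsilon>] U f] by blast
  obtain b where "b \<in> Hom B V E" and "Cmp B b x = Cmp B d f"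
    using realizes_lift[OF \<epsilon> d f hom_id] pull_id[OF push_ext[OF f realizesD(1)[OF \<epsilon>]]] by metis
  then have "factors_through B \<C> Y E (Cmp B d f)"
    unfolding factors_through_def using V realizesD(2)[OF \<epsilon>] by metis
  then have "factors_through B \<C> X E d"
    using quotient_epi_factors_through[OF assms(10) f E realizesD(2)[OF d]] by blast
  then show ?thesis
    using perp1_of_push_realization[OF realizesD(1)[OF \<epsilon>] f d _ C_perp assms(11)] by blast
qed

end
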